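(* Let $\mathbf{a}=\{a_n\}_{n=1}^\infty$ be a linearly recurrent sequence of complex numbers with minimal polynomial $f(t)$. Then $$\max_{k\ge 0} \mathrm{GR}^{(k)}(\mathbf{a}) = M(f).$$
   Context: For a sequence $\mathbf{a}=\{a_n\}_{n\ge1}$ of complex numbers and an integer $k\ge1$, the $k$th growth rate is $$\mathrm{GR}^{(k)}(\mathbf{a})=\limsup_{n\to\infty}\left|\det H_{n,k}\right|^{1/n},$$ where $H_{n,k}$ is the $k\times k$ Hankel matrix whose $(i,j)$ entry ($0\le i,j\le k-1$) is $a_{n+i+j}$; and $\mathrm{GR}^{(0)}(\mathbf{a})=1$. A linear recurrence is a relation $a_{n+d}+c_{d-1}a_{n+d-1}+\cdots+c_0a_n=0$ for all $n$, with constant complex coefficients; its characteristic polynomial is $t^d+c_{d-1}t^{d-1}+\cdots+c_0$. A sequence is linearly recurrent if it satisfies some linear recurrence, and its minimal polynomial is the unique monic characteristic polynomial of minimal degree of a linear recurrence satisfied by it. The Mahler measure of a nonzero polynomial $f(x)=c_nx^n+\cdots+c_0\in\mathbb{C}[x]$ with $c_n\neq0$ and roots $r_1,\dots,r_n$ is $M(f)=|c_n|\prod_{j=1}^n\max(|r_j|,1)$. *)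

theory Defs
  imports Complex_Main "HOL-Library.Extended_Real" "HOL-Library.Liminf_Limsup"
    "HOL-Computational_Algebra.Polynomial" "Jordan_Normal_Form.Determinant"
begin

text \<open>Sequences a = (a_n) for n >= 1 are modelled as functions nat => complex;
  the value at index 0 is never used.\<close>

definition hankel :: "(nat \<Rightarrow> complex) \<Rightarrow> nat \<Rightarrow> nat \<Rightarrow> complex mat" where
  "hankel a n k = mat k k (\<lambda>(i,j). a (n + i + j))"

definition growth_rate :: "nat \<Rightarrow> (nat \<Rightarrow> complex) \<Rightarrow> ereal" where
  "growth_rate k a = (if k = 0 then 1 else
     limsup (\<lambda>n. ereal (cmod (det (hankel a n k)) powr (1 / real n))))"

definition satisfies_recurrence :: "complex poly \<Rightarrow> (nat \<Rightarrow> complex) \<Rightarrow> bool" where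
  "satisfies_recurrence p a \<longleftrightarrow> lead_coeff p = 1 \<and>
     (\<forall>n\<ge>1. (\<Sum>i\<le>degree p. coeff p i * a (n + i)) = 0)"

definition linearly_recurrent :: "(nat \<Rightarrow> complex) \<Rightarrow> bool" where
  "linearly_recurrent a \<longleftrightarrow> (\<exists>p. satisfies_recurrence p a)"

definition minimal_polynomial :: "(nat \<Rightarrow> complex) \<Rightarrow> complex poly \<Rightarrow> bool" where
  "minimal_polynomial a f \<longleftrightarrow> satisfies_recurrence f a \<and>
     (\<forall>p. satisfies_recurrence p a \<longrightarrow> degree f \<le> degree p)"

definition mahler_measure :: "complex poly \<Rightarrow> real" where
  "mahler_measure f = cmod (lead_coeff f) *
     (\<Prod>r\<in>{r. poly f r = 0}. max (cmod r) 1 ^ order r f)"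

end

(*
  Let b n = a (n + 1), which is annihilated by f(E) for the shift operator E. Split b into
  components b_r, one for each root r of f, with b_r annihilated by (E - r)^m_r. Reducing t^j
  modulo (t - r)^m_r gives b (n + i + j) = sum_x c_x (n + i) w_x j over the deg f indices
  x = (r, l), l < m_r, where c_x n = b_r (n + l) = O(n^D max(|r|,1)^n). Expanding det H_{n,k}
  multilinearly in its rows leaves only terms with k distinct indices x, each of size
  O(n^E M(f)^n); hence GR^(k) <= M(f).

  For equality let k be the number of roots of modulus > 1 counted with multiplicity, i.e. the
  degree of the factor g of f collecting these roots. The terms using only such indices add up to
  the Hankel determinant of the corresponding part of b. The companion matrix of g propagates this
  Hankel matrix, so its determinant is (+-g(0))^n, where |g(0)| = M(f), times its value at n = 0,
  which is nonzero by minimality of f. Every other term misses a root of modulus >= mu > 1 and is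
  O(n^E (M(f)/mu)^n).
*)

theory Submission
  imports Defs "HOL-Computational_Algebra.Fundamental_Theorem_Algebra"
    "HOL-Computational_Algebra.Field_as_Ring" "HOL-Real_Asymp.Real_Asymp"
begin

section \<open>Polynomials acting on sequences through the shift\<close>

text \<open>\<^term>\<open>shift_eval p s\<close> is \<open>p(E) s\<close> for the shift operator \<open>E s n = s (n + 1)\<close>.\<close>

definition shift_eval :: "'a::comm_semiring_0 poly \<Rightarrow> (nat \<Rightarrow> 'a) \<Rightarrow> nat \<Rightarrow> 'a" where
  "shift_eval p s n = (\<Sum>i\<le>degree p. coeff p i * s (n + i))"

definition annihilates :: "'a::comm_semiring_0 poly \<Rightarrow> (nat \<Rightarrow> 'a) \<Rightarrow> bool" where
  "annihilates p s \<longleftrightarrow> (\<forall>n. shift_eval p s n = 0)"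

lemma shift_eval_degree_le:
  assumes "degree p \<le> D"
  shows "shift_eval p s n = (\<Sum>i\<le>D. coeff p i * s (n + i))"
  unfolding shift_eval_def
  by (rule sum.mono_neutral_left) (use assms in \<open>auto simp: coeff_eq_0\<close>)

lemma shift_eval_degree_less:
  assumes "degree p < D \<or> p = 0"
  shows "shift_eval p s n = (\<Sum>i<D. coeff p i * s (n + i))"
proof (cases "p = 0")
  case False
  then show ?thesis
    using assms unfolding shift_eval_def
    by (intro sum.mono_neutral_left) (auto simp: coeff_eq_0)
qed (simp add: shift_eval_def sum.neutral)

lemma shift_eval_0 [simp]: "shift_eval 0 s n = 0"
  by (simp add: shift_eval_def)

lemma shift_eval_1 [simp]: "shift_eval (1 :: 'a::comm_semiring_1 poly) s n = s n"
  by (simp add: shift_eval_def)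

lemma shift_eval_zero_seq [simp]: "shift_eval p (\<lambda>_. 0) n = 0"
  by (simp add: shift_eval_def)

lemma shift_eval_pCons: "shift_eval (pCons c p) s n = c * s n + shift_eval p s (Suc n)"
proof -
  have "shift_eval (pCons c p) s n = (\<Sum>i\<le>Suc (degree p). coeff (pCons c p) i * s (n + i))"
    by (rule shift_eval_degree_le) (simp add: degree_pCons_le)
  also have "\<dots> = c * s n + shift_eval p s (Suc n)"
    by (subst sum.atMost_Suc_shift) (simp add: shift_eval_def)
  finally show ?thesis .
qed

lemma shift_eval_add: "shift_eval (p + q) s n = shift_eval p s n + shift_eval q s n"
proof -
  let ?D = "max (degree p) (degree q)"
  have "shift_eval (p + q) s n = (\<Sum>i\<le>?D. coeff (p + q) i * s (n + i))"
    by (rule shift_eval_degree_le) (simp add: degree_add_le)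
  also have "\<dots> = (\<Sum>i\<le>?D. coeff p i * s (n + i)) + (\<Sum>i\<le>?D. coeff q i * s (n + i))"
    by (simp add: distrib_right sum.distrib)
  also have "(\<Sum>i\<le>?D. coeff p i * s (n + i)) = shift_eval p s n"
    by (rule shift_eval_degree_le[symmetric]) simp
  also have "(\<Sum>i\<le>?D. coeff q i * s (n + i)) = shift_eval q s n"
    by (rule shift_eval_degree_le[symmetric]) simp
  finally show ?thesis .
qed

lemma shift_eval_smult: "shift_eval (smult c p) s n = c * shift_eval p s n"
proof -
  have "shift_eval (smult c p) s n = (\<Sum>i\<le>degree p. coeff (smult c p) i * s (n + i))"
    by (rule shift_eval_degree_le) (simp add: degree_smult_le)
  then show ?thesis
    by (simp add: shift_eval_def sum_distrib_left mult.assoc)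
qed

lemma shift_eval_mult: "shift_eval (p * q) s n = shift_eval p (shift_eval q s) n"
proof (induction p arbitrary: n)
  case (pCons c p)
  have "shift_eval (pCons c p * q) s n = c * shift_eval q s n + shift_eval (p * q) s (Suc n)"
    by (simp add: shift_eval_add shift_eval_smult shift_eval_pCons)
  then show ?case
    by (simp add: pCons.IH shift_eval_pCons)
qed simp

lemma shift_eval_monom: "shift_eval (monom c j) s n = c * s (n + j)"
proof -
  have "shift_eval (monom c j) s n = (\<Sum>i\<le>j. coeff (monom c j) i * s (n + i))"
    by (rule shift_eval_degree_le) (simp add: degree_monom_le)
  also have "\<dots> = c * s (n + j)"
    by (subst sum.remove[of _ j]) (auto simp: coeff_monom)
  finally show ?thesis .
qed

lemma shift_eval_sum: "shift_eval (\<Sum>r\<in>R. p r) s n = (\<Sum>r\<in>R. shift_eval (p r) s n)"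
  by (induction R rule: infinite_finite_induct) (auto simp: shift_eval_add)

lemma shift_eval_seq_add: "shift_eval p (\<lambda>n. s n + t n) n = shift_eval p s n + shift_eval p t n"
  by (simp add: shift_eval_def distrib_left sum.distrib)

lemma shift_eval_seq_sum: "shift_eval p (\<lambda>n. \<Sum>r\<in>R. s r n) n = (\<Sum>r\<in>R. shift_eval p (s r) n)"
  by (simp add: shift_eval_def sum_distrib_left sum.swap[of _ R])

lemma shift_eval_seq_shift: "shift_eval p (\<lambda>n. s (n + l)) n = shift_eval p s (n + l)"
  by (simp add: shift_eval_def algebra_simps)

lemma annihilates_mult:
  assumes "annihilates q s"
  shows "annihilates (p * q) s"
proof -
  have "shift_eval q s = (\<lambda>_. 0)"
    using assms by (auto simp: annihilates_def)
  then show ?thesis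
    by (simp add: annihilates_def shift_eval_mult)
qed

lemma annihilates_dvd: "annihilates p s \<Longrightarrow> p dvd q \<Longrightarrow> annihilates q s"
  by (metis annihilates_mult dvdE mult.commute)

lemma annihilates_shift: "annihilates p s \<Longrightarrow> annihilates p (\<lambda>n. s (n + l))"
  by (simp add: annihilates_def shift_eval_seq_shift)

lemma annihilates_shift_eval: "annihilates p s \<Longrightarrow> annihilates p (shift_eval q s)"
  by (metis annihilates_def annihilates_mult mult.commute shift_eval_mult)

lemma annihilates_seq_add:
  "annihilates p s \<Longrightarrow> annihilates p t \<Longrightarrow> annihilates p (\<lambda>n. s n + t n)"
  by (simp add: annihilates_def shift_eval_seq_add)

lemma annihilates_seq_sum:
  "(\<And>r. r \<in> R \<Longrightarrow> annihilates p (s r)) \<Longrightarrow> annihilates p (\<lambda>n. \<Sum>r\<in>R. s r n)"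
  by (simp add: annihilates_def shift_eval_seq_sum)

lemma shift_eval_mod:
  fixes p q :: "'a::field poly"
  assumes "annihilates q s"
  shows "shift_eval (p mod q) s n = shift_eval p s n"
proof -
  have "shift_eval p s n = shift_eval (p div q * q) s n + shift_eval (p mod q) s n"
    by (metis div_mult_mod_eq shift_eval_add)
  moreover have "annihilates (p div q * q) s"
    using assms by (rule annihilates_mult)
  ultimately show ?thesis
    by (simp add: annihilates_def)
qed

lemma annihilated_eq_window_sum:
  fixes q :: "'a::field poly"
  assumes "annihilates q s" "q \<noteq> 0"
  shows "s (N + j) = (\<Sum>l<degree q. coeff (monom 1 j mod q) l * s (N + l))"
proof -
  have "s (N + j) = shift_eval (monom 1 j mod q) s N"
    using assms(1) by (simp add: shift_eval_mod shift_eval_monom)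
  also have "\<dots> = (\<Sum>l<degree q. coeff (monom 1 j mod q) l * s (N + l))"
    by (rule shift_eval_degree_less) (use assms(2) degree_mod_less' in blast)
  finally show ?thesis .
qed

lemma annihilated_eq_0:
  fixes q :: "'a::field poly"
  assumes "annihilates q s" "q \<noteq> 0" "\<And>i. i < degree q \<Longrightarrow> s i = 0"
  shows "s n = 0"
  using annihilated_eq_window_sum[OF assms(1,2), of 0 n] assms(3) by simp

lemma annihilated_monic_step:
  fixes g :: "'a::comm_ring_1 poly"
  assumes "lead_coeff g = 1" "annihilates g s"
  shows "s (n + degree g) = - (\<Sum>l<degree g. coeff g l * s (n + l))"
proof -
  have "0 = shift_eval g s n"
    using assms(2) by (simp add: annihilates_def)
  also have "\<dots> = (\<Sum>l<degree g. coeff g l * s (n + l)) + s (n + degree g)"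
    using assms(1) by (simp add: shift_eval_def lessThan_Suc_atMost[symmetric])
  finally show ?thesis
    by (simp add: eq_neg_iff_add_eq_0 add.commute)
qed

section \<open>Recurrences and their decomposition along the roots\<close>

lemma satisfies_recurrence_iff_annihilates:
  "satisfies_recurrence p a \<longleftrightarrow> lead_coeff p = 1 \<and> annihilates p (\<lambda>n. a (Suc n))"
proof -
  have "(\<forall>n\<ge>1. P n) \<longleftrightarrow> (\<forall>n. P (Suc n))" for P :: "nat \<Rightarrow> bool"
    by (auto simp: Suc_le_eq gr0_conv_Suc)
  then show ?thesis
    by (simp add: satisfies_recurrence_def annihilates_def shift_eval_def)
qed

lemma minimal_polynomial_dvd:
  assumes "minimal_polynomial a f" "annihilates p (\<lambda>n. a (Suc n))" "p \<noteq> 0"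
  shows "f dvd p"
proof (rule ccontr)
  let ?b = "\<lambda>n. a (Suc n)"
  have f: "lead_coeff f = 1" "annihilates f ?b"
    using assms(1) by (auto simp: minimal_polynomial_def satisfies_recurrence_iff_annihilates)
  define r where "r = p mod f"
  assume "\<not> f dvd p"
  then have "r \<noteq> 0"
    by (simp add: r_def mod_eq_0_iff_dvd)
  have "annihilates r ?b"
    using assms(2) f(2) by (simp add: annihilates_def r_def shift_eval_mod)
  then have "satisfies_recurrence (smult (inverse (lead_coeff r)) r) a"
    using \<open>r \<noteq> 0\<close> by (simp add: satisfies_recurrence_iff_annihilates annihilates_def shift_eval_smult)
  then have "degree f \<le> degree (smult (inverse (lead_coeff r)) r)"
    using assms(1) by (auto simp: minimal_polynomial_def)
  then have "degree f \<le> degree r"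
    using \<open>r \<noteq> 0\<close> by simp
  moreover have "degree r < degree f"
    using degree_mod_less'[of f p] \<open>r \<noteq> 0\<close> f(1) unfolding r_def by fastforce
  ultimately show False
    by simp
qed

lemma coprime_linear_powers:
  fixes \<alpha> \<beta> :: "'a::field_gcd"
  assumes "\<alpha> \<noteq> \<beta>"
  shows "coprime ([:-\<alpha>, 1:] ^ m) ([:-\<beta>, 1:] ^ n)"
proof -
  have "coprime [:-\<alpha>, 1:] [:-\<beta>, 1:]"
  proof (rule coprimeI)
    fix c
    assume "c dvd [:-\<alpha>, 1:]" "c dvd [:-\<beta>, 1:]"
    then have "c dvd [:-\<alpha>, 1:] - [:-\<beta>, 1:]"
      by (rule dvd_diff)
    moreover have "[:-\<alpha>, 1:] - [:-\<beta>, 1:] = [:\<beta> - \<alpha>:]"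
      by simp
    moreover have "is_unit [:\<beta> - \<alpha>:]"
      using assms by (auto simp: is_unit_const_poly_iff dvd_field_iff)
    ultimately show "is_unit c"
      using dvd_unit_imp_unit by metis
  qed
  then show ?thesis
    by (simp add: coprime_power_left_iff coprime_power_right_iff)
qed

lemma annihilates_prod_decompose:
  fixes P :: "'b \<Rightarrow> 'a::field_gcd poly"
  assumes "finite R" "\<And>r r'. r \<in> R \<Longrightarrow> r' \<in> R \<Longrightarrow> r \<noteq> r' \<Longrightarrow> coprime (P r) (P r')"
    and "annihilates (\<Prod>r\<in>R. P r) s"
  shows "\<exists>b. (\<forall>r\<in>R. annihilates (P r) (b r)) \<and> (\<forall>n. s n = (\<Sum>r\<in>R. b r n))"
  using assms
proof (induction R arbitrary: s rule: finite_induct)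
  case empty
  then show ?case
    by (simp add: annihilates_def)
next
  case (insert r R)
  define Q where "Q = (\<Prod>r\<in>R. P r)"
  have "coprime (P r) Q"
    unfolding Q_def using insert.prems(1) insert.hyps(2) by (intro prod_coprime_right) fastforce
  define u v where "u = fst (bezout_coefficients (P r) Q)" and "v = snd (bezout_coefficients (P r) Q)"
  have uv: "u * P r + v * Q = 1"
    using \<open>coprime (P r) Q\<close> by (simp add: u_def v_def bezout_coefficients_fst_snd coprime_iff_gcd_eq_1)
  have PQ: "annihilates (P r * Q) s"
    using insert.prems(2) by (simp add: Q_def insert.hyps)
  txt \<open>By Bezout, \<open>s = (v Q)(E) s + (u P_r)(E) s\<close>, and the two summands are annihilated
    by \<open>P_r\<close> and \<open>Q\<close> respectively.\<close>
  define s1 where "s1 = shift_eval (v * Q) s"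
  define s2 where "s2 = shift_eval (u * P r) s"
  have s1: "annihilates (P r) s1"
    using annihilates_dvd[OF PQ, of "P r * (v * Q)"]
    by (simp add: annihilates_def s1_def shift_eval_mult[symmetric] mult.left_commute)
  have s2: "annihilates Q s2"
    using annihilates_dvd[OF PQ, of "Q * (u * P r)"]
    by (simp add: annihilates_def s2_def shift_eval_mult[symmetric] mult.left_commute mult.commute)
  obtain b where b: "\<forall>r\<in>R. annihilates (P r) (b r)" "\<forall>n. s2 n = (\<Sum>r\<in>R. b r n)"
    using insert.IH[OF _ s2[unfolded Q_def]] insert.prems(1) by blast
  have "s n = s1 n + s2 n" for n
    using shift_eval_add[of "u * P r" "v * Q" s n] uv by (simp add: s1_def s2_def add.commute)
  moreover have "(\<Sum>r'\<in>R. (b(r := s1)) r' n) = s2 n" for n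
    using insert.hyps(2) b(2) by (auto intro: sum.cong)
  ultimately have "\<forall>n. s n = (\<Sum>r'\<in>insert r R. (b(r := s1)) r' n)"
    using insert.hyps by simp
  moreover have "\<forall>r'\<in>insert r R. annihilates (P r') ((b(r := s1)) r')"
    using b(1) s1 by auto
  ultimately show ?case
    by blast
qed

lemma norm_first_order_recursion_le:
  fixes s t :: "nat \<Rightarrow> 'a::real_normed_field"
  assumes "\<And>n. s (Suc n) = t n + \<alpha> * s n" "\<And>n. norm (t n) \<le> K * (real n + 1) ^ m * \<rho> ^ n"
    and "norm \<alpha> \<le> \<rho>" "1 \<le> \<rho>" "norm (s 0) \<le> K" "0 \<le> K"
  shows "norm (s n) \<le> K * (real n + 1) ^ Suc m * \<rho> ^ n"
proof (induction n)
  case (Suc n)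
  have "norm (s (Suc n)) \<le> norm (t n) + norm \<alpha> * norm (s n)"
    by (metis assms(1) norm_mult norm_triangle_ineq)
  also have "\<dots> \<le> K * (real n + 1) ^ m * \<rho> ^ n + \<rho> * (K * (real n + 1) ^ Suc m * \<rho> ^ n)"
    using assms(2-4) Suc.IH by (intro add_mono mult_mono) auto
  also have "\<dots> = K * \<rho> ^ n * (real n + 1) ^ m * (1 + \<rho> * (real n + 1))"
    by (simp add: algebra_simps)
  also have "\<dots> \<le> K * \<rho> ^ n * (real n + 2) ^ m * (\<rho> * (real n + 2))"
    using assms(4,6) by (intro mult_mono power_mono) (auto simp: algebra_simps)
  also have "\<dots> = K * (real (Suc n) + 1) ^ Suc m * \<rho> ^ Suc n"
    by (simp add: algebra_simps)
  finally show ?case .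
qed (use assms(5) in simp)

lemma annihilated_by_linear_power_bound:
  fixes s :: "nat \<Rightarrow> 'a::real_normed_field"
  assumes "annihilates ([:-\<alpha>, 1:] ^ m) s"
  shows "\<exists>K\<ge>0. \<forall>n. norm (s n) \<le> K * (real n + 1) ^ m * max (norm \<alpha>) 1 ^ n"
  using assms
proof (induction m arbitrary: s)
  case 0
  then show ?case
    by (auto simp: annihilates_def intro!: exI[of _ 0])
next
  case (Suc m)
  define \<rho> where "\<rho> = max (norm \<alpha>) 1"
  define t where "t = shift_eval [:-\<alpha>, 1:] s"
  have "annihilates ([:-\<alpha>, 1:] ^ m) t"
    using Suc.prems by (simp add: annihilates_def t_def shift_eval_mult[symmetric] power_Suc2)
  from Suc.IH[OF this] obtain K where K: "K \<ge> 0" "\<And>n. norm (t n) \<le> K * (real n + 1) ^ m * \<rho> ^ n"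
    by (auto simp: \<rho>_def)
  define K' where "K' = max K (norm (s 0))"
  have "norm (t n) \<le> K' * (real n + 1) ^ m * \<rho> ^ n" for n
  proof -
    have "K * (real n + 1) ^ m * \<rho> ^ n \<le> K' * (real n + 1) ^ m * \<rho> ^ n"
      by (intro mult_right_mono) (auto simp: K'_def \<rho>_def)
    then show ?thesis
      using K(2)[of n] by linarith
  qed
  then have "norm (s n) \<le> K' * (real n + 1) ^ Suc m * \<rho> ^ n" for n
    using K(1) by (intro norm_first_order_recursion_le[where t = t and \<alpha> = \<alpha>])
      (auto simp: t_def shift_eval_pCons \<rho>_def K'_def)
  moreover have "0 \<le> K'"
    using K(1) by (simp add: K'_def)
  ultimately show ?case
    unfolding \<rho>_def by blast
qed

lemma sum_annihilated_eq_sum_Sigma: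
  fixes q :: "'b \<Rightarrow> 'a::field poly"
  assumes "finite S" "\<And>r. r \<in> S \<Longrightarrow> annihilates (q r) (s r)" "\<And>r. r \<in> S \<Longrightarrow> q r \<noteq> 0"
  shows "(\<Sum>r\<in>S. s r (n + j)) =
    (\<Sum>(r, l)\<in>(SIGMA r:S. {..<degree (q r)}). s r (n + l) * coeff (monom 1 j mod q r) l)"
proof -
  have "(\<Sum>r\<in>S. s r (n + j)) = (\<Sum>r\<in>S. \<Sum>l<degree (q r). s r (n + l) * coeff (monom 1 j mod q r) l)"
  proof (rule sum.cong)
    fix r
    assume "r \<in> S"
    show "s r (n + j) = (\<Sum>l<degree (q r). s r (n + l) * coeff (monom 1 j mod q r) l)"
      using annihilated_eq_window_sum[OF assms(2,3)[OF \<open>r \<in> S\<close>], of n j]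
      by (simp only: mult.commute)
  qed simp
  also have "\<dots> = (\<Sum>(r, l)\<in>(SIGMA r:S. {..<degree (q r)}). s r (n + l) * coeff (monom 1 j mod q r) l)"
    using assms(1) by (subst sum.Sigma) auto
  finally show ?thesis .
qed

section \<open>Determinants\<close>

lemma det_mat_eq:
  "det (mat k k F) = (\<Sum>p\<in>{p. p permutes {0..<k}}. signof p * (\<Prod>i=0..<k. F (i, p i)))"
proof -
  have "det (mat k k F) = (\<Sum>p\<in>{p. p permutes {0..<k}}. signof p * (\<Prod>i=0..<k. mat k k F $$ (i, p i)))"
    by (rule det_def') simp
  also have "\<dots> = (\<Sum>p\<in>{p. p permutes {0..<k}}. signof p * (\<Prod>i=0..<k. F (i, p i)))"
    by (intro sum.cong refl arg_cong2[where f = "(*)"] prod.cong) (auto simp: permutes_in_image)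
  finally show ?thesis .
qed

lemma det_mat_sum_rows:
  fixes c w :: "'x \<Rightarrow> nat \<Rightarrow> 'a::comm_ring_1"
  assumes "finite X"
  shows "det (mat k k (\<lambda>(i, j). \<Sum>x\<in>X. c x i * w x j)) =
    (\<Sum>\<tau>\<in>{0..<k} \<rightarrow>\<^sub>E X. (\<Prod>i=0..<k. c (\<tau> i) i) * det (mat k k (\<lambda>(i, j). w (\<tau> i) j)))"
proof -
  let ?P = "{p. p permutes {0..<k}}"
  let ?T = "{0..<k} \<rightarrow>\<^sub>E X"
  have "det (mat k k (\<lambda>(i, j). \<Sum>x\<in>X. c x i * w x j)) =
      (\<Sum>p\<in>?P. signof p * (\<Sum>\<tau>\<in>?T. \<Prod>i=0..<k. c (\<tau> i) i * w (\<tau> i) (p i)))"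
    using assms by (simp add: det_mat_eq prod_sum_PiE)
  also have "\<dots> = (\<Sum>\<tau>\<in>?T. \<Sum>p\<in>?P. (\<Prod>i=0..<k. c (\<tau> i) i) * (signof p * (\<Prod>i=0..<k. w (\<tau> i) (p i))))"
    by (subst sum.swap) (simp add: sum_distrib_left prod.distrib algebra_simps)
  also have "\<dots> = (\<Sum>\<tau>\<in>?T. (\<Prod>i=0..<k. c (\<tau> i) i) * det (mat k k (\<lambda>(i, j). w (\<tau> i) j)))"
    by (simp add: det_mat_eq sum_distrib_left)
  finally show ?thesis .
qed

lemma det_mat_rows_not_inj:
  assumes "\<not> inj_on \<tau> {0..<k}"
  shows "det (mat k k (\<lambda>(i, j). w (\<tau> i) j)) = (0 :: 'a::comm_ring_1)"
proof -
  from assms obtain i j where "i < k" "j < k" "i \<noteq> j" "\<tau> i = \<tau> j"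
    by (auto simp: inj_on_def)
  then show ?thesis
    by (intro det_identical_rows[of _ k i j]) (auto intro!: eq_vecI)
qed

lemma prod_le_prod_strict:
  fixes \<rho> :: "'x \<Rightarrow> real"
  assumes "finite S" "finite X" "card S = card X" "\<not> S \<subseteq> X"
    and "\<And>x. x \<in> S - X \<Longrightarrow> \<rho> x = 1" "\<And>x. x \<in> X \<Longrightarrow> \<mu> \<le> \<rho> x" "1 \<le> \<mu>"
  shows "\<mu> * (\<Prod>x\<in>S. \<rho> x) \<le> (\<Prod>x\<in>X. \<rho> x)"
proof -
  have nonneg: "0 \<le> \<rho> x" if "x \<in> S \<union> X" for x
    using assms(5-7) that by (cases "x \<in> X") fastforce+
  have "card (S \<inter> X) < card S"
    using assms(1,4) by (intro psubset_card_mono) auto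
  then have "\<not> X \<subseteq> S \<inter> X"
    using assms(1,3) by (metis card_mono finite_Int leD)
  then obtain x0 where x0: "x0 \<in> X" "x0 \<notin> S"
    by blast
  have "(\<Prod>x\<in>S. \<rho> x) = (\<Prod>x\<in>S \<inter> X. \<rho> x)"
    using assms(1,5) by (intro prod.mono_neutral_right) auto
  also have "\<dots> \<le> (\<Prod>x\<in>X - {x0}. \<rho> x)"
    using assms(2,6,7) x0 by (intro prod_mono2) fastforce+
  finally have "\<mu> * (\<Prod>x\<in>S. \<rho> x) \<le> \<rho> x0 * (\<Prod>x\<in>X - {x0}. \<rho> x)"
    using assms(6,7) x0 nonneg by (intro mult_mono) (auto intro!: prod_nonneg)
  also have "\<dots> = (\<Prod>x\<in>X. \<rho> x)"
    using assms(2) x0(1) by (simp add: prod.remove)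
  finally show ?thesis .
qed

lemma norm_shift_le:
  fixes c :: "nat \<Rightarrow> 'a::real_normed_vector"
  assumes "\<And>n. norm (c n) \<le> K * (real n + 1) ^ D * \<rho> ^ n" "0 \<le> \<rho>"
  shows "norm (c (n + i)) \<le> (K * (real i + 1) ^ D * \<rho> ^ i) * ((real n + 1) ^ D * \<rho> ^ n)"
proof -
  have "norm (c 0) \<le> K"
    using assms(1)[of 0] by simp
  then have "0 \<le> K"
    using norm_ge_zero[of "c 0"] by linarith
  have "(real (n + i) + 1) ^ D \<le> ((real n + 1) * (real i + 1)) ^ D"
    by (intro power_mono) (auto simp: algebra_simps)
  then have "K * (real (n + i) + 1) ^ D * \<rho> ^ (n + i) \<le> K * ((real n + 1) * (real i + 1)) ^ D * \<rho> ^ (n + i)"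
    using \<open>0 \<le> K\<close> assms(2) by (intro mult_right_mono mult_left_mono) auto
  then show ?thesis
    using assms(1)[of "n + i"] by (simp add: power_add power_mult_distrib mult_ac)
qed

lemma norm_prod_shift_le:
  fixes c :: "'x \<Rightarrow> nat \<Rightarrow> 'a::real_normed_field"
  assumes "\<And>x n. x \<in> X \<Longrightarrow> norm (c x n) \<le> K x * (real n + 1) ^ D * \<rho> x ^ n"
    and "\<And>x. x \<in> X \<Longrightarrow> 0 \<le> \<rho> x" "\<And>i. i < k \<Longrightarrow> \<tau> i \<in> X"
  shows "norm (\<Prod>i=0..<k. c (\<tau> i) (n + i))
    \<le> (\<Prod>i=0..<k. K (\<tau> i) * (real i + 1) ^ D * \<rho> (\<tau> i) ^ i) * (real n + 1) ^ (D * k) * (\<Prod>i=0..<k. \<rho> (\<tau> i)) ^ n"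
proof -
  have "norm (\<Prod>i=0..<k. c (\<tau> i) (n + i)) = (\<Prod>i=0..<k. norm (c (\<tau> i) (n + i)))"
    by (simp add: prod_norm)
  also have "\<dots> \<le> (\<Prod>i=0..<k. (K (\<tau> i) * (real i + 1) ^ D * \<rho> (\<tau> i) ^ i) * ((real n + 1) ^ D * \<rho> (\<tau> i) ^ n))"
  proof (rule prod_mono)
    fix i
    assume "i \<in> {0..<k}"
    then have "norm (c (\<tau> i) (n + i)) \<le> (K (\<tau> i) * (real i + 1) ^ D * \<rho> (\<tau> i) ^ i) * ((real n + 1) ^ D * \<rho> (\<tau> i) ^ n)"
      using assms by (intro norm_shift_le) auto
    then show "0 \<le> norm (c (\<tau> i) (n + i)) \<and> norm (c (\<tau> i) (n + i)) \<le> (K (\<tau> i) * (real i + 1) ^ D * \<rho> (\<tau> i) ^ i) * ((real n + 1) ^ D * \<rho> (\<tau> i) ^ n)"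
      by simp
  qed
  also have "\<dots> = (\<Prod>i=0..<k. K (\<tau> i) * (real i + 1) ^ D * \<rho> (\<tau> i) ^ i) * (real n + 1) ^ (D * k) * (\<Prod>i=0..<k. \<rho> (\<tau> i)) ^ n"
    by (simp add: prod.distrib prod_power_distrib power_mult mult.assoc)
  finally show ?thesis .
qed

lemma norm_sum_det_rows_le:
  fixes c w :: "'x \<Rightarrow> nat \<Rightarrow> complex" and K \<rho> :: "'x \<Rightarrow> real"
  assumes "finite X" "Y \<subseteq> {0..<k} \<rightarrow>\<^sub>E X"
    and c: "\<And>x n. x \<in> X \<Longrightarrow> cmod (c x n) \<le> K x * (real n + 1) ^ D * \<rho> x ^ n"
    and \<rho>: "\<And>x. x \<in> X \<Longrightarrow> 0 \<le> \<rho> x"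
    and Q: "\<And>\<tau>. \<tau> \<in> Y \<Longrightarrow> inj_on \<tau> {0..<k} \<Longrightarrow> (\<Prod>i=0..<k. \<rho> (\<tau> i)) \<le> Q"
  shows "\<exists>C. \<forall>n. cmod (\<Sum>\<tau>\<in>Y. (\<Prod>i=0..<k. c (\<tau> i) (n + i)) * det (mat k k (\<lambda>(i, j). w (\<tau> i) j)))
           \<le> C * (real n + 1) ^ (D * k) * Q ^ n"
proof -
  let ?W = "\<lambda>\<tau>. cmod (det (mat k k (\<lambda>(i, j). w (\<tau> i) j)))"
  define B where "B \<tau> = (\<Prod>i=0..<k. K (\<tau> i) * (real i + 1) ^ D * \<rho> (\<tau> i) ^ i)" for \<tau>
  have term_le: "cmod ((\<Prod>i=0..<k. c (\<tau> i) (n + i)) * det (mat k k (\<lambda>(i, j). w (\<tau> i) j)))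
      \<le> B \<tau> * ?W \<tau> * (real n + 1) ^ (D * k) * Q ^ n" if "\<tau> \<in> Y" for \<tau> n
  proof (cases "inj_on \<tau> {0..<k}")
    case True
    have \<tau>X: "\<tau> i \<in> X" if "i < k" for i
      using that by (intro PiE_mem[OF subsetD[OF assms(2) \<open>\<tau> \<in> Y\<close>]]) simp
    have "0 \<le> K x" if "x \<in> X" for x
      using c[OF that, of 0] norm_ge_zero[of "c x 0"] by (simp del: norm_ge_zero)
    then have "0 \<le> B \<tau>"
      unfolding B_def using \<rho> \<tau>X by (auto intro!: prod_nonneg)
    have "cmod (\<Prod>i=0..<k. c (\<tau> i) (n + i)) \<le> B \<tau> * (real n + 1) ^ (D * k) * (\<Prod>i=0..<k. \<rho> (\<tau> i)) ^ n"
      unfolding B_def by (rule norm_prod_shift_le[OF c \<rho> \<tau>X])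
    also have "\<dots> \<le> B \<tau> * (real n + 1) ^ (D * k) * Q ^ n"
      using \<open>0 \<le> B \<tau>\<close> \<rho> \<tau>X Q[OF \<open>\<tau> \<in> Y\<close> True]
      by (intro mult_left_mono power_mono) (auto intro!: prod_nonneg)
    finally have "cmod (\<Prod>i=0..<k. c (\<tau> i) (n + i)) \<le> B \<tau> * (real n + 1) ^ (D * k) * Q ^ n" .
    from mult_right_mono[OF this norm_ge_zero[of "det (mat k k (\<lambda>(i, j). w (\<tau> i) j))"]]
    show ?thesis
      by (simp add: norm_mult mult_ac)
  qed (simp add: det_mat_rows_not_inj)
  have "cmod (\<Sum>\<tau>\<in>Y. (\<Prod>i=0..<k. c (\<tau> i) (n + i)) * det (mat k k (\<lambda>(i, j). w (\<tau> i) j)))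
      \<le> (\<Sum>\<tau>\<in>Y. B \<tau> * ?W \<tau>) * (real n + 1) ^ (D * k) * Q ^ n" for n
    using order.trans[OF norm_sum sum_mono[OF term_le]] by (simp add: sum_distrib_right)
  then show ?thesis
    by blast
qed

definition companion_mat :: "'a::comm_ring_1 poly \<Rightarrow> 'a mat" where
  "companion_mat g = mat (degree g) (degree g)
     (\<lambda>(i, j). if Suc i < degree g then of_bool (j = Suc i) else - coeff g j)"

lemma det_companion_mat:
  fixes g :: "'a::comm_ring_1 poly"
  assumes "lead_coeff g = 1"
  shows "det (companion_mat g) = (-1) ^ degree g * coeff g 0"
proof (cases "degree g")
  case 0
  then have "companion_mat g = 1\<^sub>m 0"
    by (intro eq_matI) (auto simp: companion_mat_def)
  then show ?thesis
    using 0 assms by simp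
next
  case (Suc k)
  let ?C = "companion_mat g"
  have C: "?C \<in> carrier_mat (Suc k) (Suc k)"
    using Suc by (simp add: companion_mat_def)
  have "det ?C = (\<Sum>i<Suc k. ?C $$ (i, 0) * cofactor ?C i 0)"
    by (rule laplace_expansion_column[OF C]) simp
  also have "\<dots> = ?C $$ (k, 0) * cofactor ?C k 0"
    by (subst sum.lessThan_Suc) (auto simp: companion_mat_def Suc intro!: sum.neutral)
  also have "mat_delete ?C k 0 = 1\<^sub>m k"
    by (rule eq_matI) (auto simp: companion_mat_def mat_delete_def Suc)
  then have "cofactor ?C k 0 = (-1) ^ k"
    by (simp add: cofactor_def)
  finally show ?thesis
    by (simp add: companion_mat_def Suc)
qed

lemma hankel_Suc_eq_companion_mult:
  assumes "lead_coeff g = 1" "annihilates g s"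
  shows "hankel s (Suc N) (degree g) = companion_mat g * hankel s N (degree g)"
    (is "?L = ?C * ?H")
proof (rule eq_matI)
  let ?k = "degree g"
  fix i j
  assume "i < dim_row (?C * ?H)" "j < dim_col (?C * ?H)"
  then have ij: "i < ?k" "j < ?k"
    by (auto simp: companion_mat_def hankel_def)
  have "(?C * ?H) $$ (i, j) =
      (\<Sum>l<?k. (if Suc i < ?k then of_bool (l = Suc i) else - coeff g l) * s (N + l + j))"
    using ij by (simp add: companion_mat_def hankel_def scalar_prod_def atLeast0LessThan)
  also have "\<dots> = s (Suc N + i + j)"
  proof (cases "Suc i < ?k")
    case True
    then show ?thesis
      by (simp add: of_bool_def if_distrib[of "\<lambda>x. x * _"] sum.delta cong: if_cong)
  next
    case False
    have "s (Suc N + i + j) = s (N + j + ?k)"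
      using False ij by (intro arg_cong[where f = s]) simp
    also have "\<dots> = - (\<Sum>l<?k. coeff g l * s (N + j + l))"
      by (rule annihilated_monic_step[OF assms])
    finally show ?thesis
      using False by (simp add: sum_negf add_ac)
  qed
  finally show "?L $$ (i, j) = (?C * ?H) $$ (i, j)"
    using ij by (simp add: hankel_def)
qed (simp_all add: companion_mat_def hankel_def)

lemma det_hankel_annihilated:
  assumes "lead_coeff g = 1" "annihilates g s"
  shows "det (hankel s N (degree g)) = ((-1) ^ degree g * coeff g 0) ^ N * det (hankel s 0 (degree g))"
proof (induction N)
  case (Suc N)
  have "det (hankel s (Suc N) (degree g)) = det (companion_mat g) * det (hankel s N (degree g))"
    unfolding hankel_Suc_eq_companion_mult[OF assms]
    by (rule det_mult) (auto simp: companion_mat_def hankel_def)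
  then show ?case
    by (simp add: Suc.IH det_companion_mat[OF assms(1)])
qed simp

lemma singular_hankel_poly:
  assumes "det (hankel s 0 k) = 0"
  obtains q where "q \<noteq> 0" "degree q < k" "\<And>i. i < k \<Longrightarrow> shift_eval q s i = 0"
proof -
  obtain v where v: "v \<in> carrier_vec k" "v \<noteq> 0\<^sub>v k" "hankel s 0 k *\<^sub>v v = 0\<^sub>v k"
    using assms det_0_iff_vec_prod_zero[of "hankel s 0 k" k] by (auto simp: hankel_def)
  define q where "q = (\<Sum>j<k. monom (v $ j) j)"
  have coeff_q: "coeff q l = (if l < k then v $ l else 0)" for l
    by (simp add: q_def coeff_sum coeff_monom)
  obtain j0 where j0: "j0 < k" "v $ j0 \<noteq> 0"
    using v(1,2) by (metis carrier_vecD eq_vecI index_zero_vec)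
  have "q \<noteq> 0"
    using coeff_q[of j0] j0 by auto
  moreover have "degree q < k"
    using j0 by (intro le_less_trans[OF degree_le[of "k - 1"]]) (auto simp: coeff_q)
  moreover have "shift_eval q s i = 0" if "i < k" for i
  proof -
    have "shift_eval q s i = (\<Sum>j<k. v $ j * s (i + j))"
      by (simp add: q_def shift_eval_sum shift_eval_monom)
    also have "\<dots> = (hankel s 0 k *\<^sub>v v) $ i"
      using that v(1) by (simp add: hankel_def scalar_prod_def atLeast0LessThan mult.commute)
    finally show ?thesis
      using v(3) that by simp
  qed
  ultimately show ?thesis
    using that by blast
qed

lemma det_hankel_0_nonzero:
  fixes g h :: "complex poly"
  assumes min: "\<And>p. p \<noteq> 0 \<Longrightarrow> annihilates p (\<lambda>n. s n + t n) \<Longrightarrow> g * h dvd p"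
    and "annihilates g s" "annihilates h t" "g \<noteq> 0" "h \<noteq> 0"
  shows "det (hankel s 0 (degree g)) \<noteq> 0"
proof
  assume "det (hankel s 0 (degree g)) = 0"
  then obtain q where q: "q \<noteq> 0" "degree q < degree g" "\<And>i. i < degree g \<Longrightarrow> shift_eval q s i = 0"
    using singular_hankel_poly by blast
  txt \<open>\<open>q(E) s\<close> is annihilated by \<open>g\<close> and vanishes on \<open>[0, deg g)\<close>, hence everywhere.\<close>
  have "shift_eval q s = (\<lambda>_. 0)"
    using q annihilated_eq_0[OF annihilates_shift_eval[OF assms(2)] \<open>g \<noteq> 0\<close>] by blast
  then have "annihilates (q * h) s"
    by (simp add: annihilates_def shift_eval_mult mult.commute[of q])
  then have "annihilates (q * h) (\<lambda>n. s n + t n)"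
    using annihilates_mult[OF assms(3)] by (rule annihilates_seq_add)
  then have "g * h dvd q * h"
    using \<open>q \<noteq> 0\<close> \<open>h \<noteq> 0\<close> by (intro min) simp_all
  then have "degree g \<le> degree q"
    using \<open>q \<noteq> 0\<close> \<open>h \<noteq> 0\<close> by (simp add: dvd_imp_degree_le)
  then show False
    using \<open>degree q < degree g\<close> by simp
qed

section \<open>Growth rates from two-sided bounds\<close>

lemma eventually_poly_le_exp:
  fixes C \<epsilon> \<mu> :: real
  assumes "1 < \<mu>" "0 < \<epsilon>"
  shows "eventually (\<lambda>n. C * (real n + 1) ^ E \<le> \<epsilon> * \<mu> ^ n) sequentially"
  using assms by real_asymp

lemma eventually_norm_ge_of_dominant:
  fixes x y :: "nat \<Rightarrow> 'a::real_normed_vector"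
  assumes "1 < \<mu>" "0 < c" "0 < M" "\<And>n. norm (y n) = M ^ n * c"
    and "\<And>n. norm (x n - y n) \<le> C * (real n + 1) ^ E * (M / \<mu>) ^ n"
  shows "\<forall>\<^sub>F n in sequentially. c / 2 * M ^ n \<le> norm (x n)"
proof -
  have "\<forall>\<^sub>F n in sequentially. C * (real n + 1) ^ E \<le> c / 2 * \<mu> ^ n"
    using assms(1,2) by (intro eventually_poly_le_exp) auto
  then show ?thesis
  proof eventually_elim
    case (elim n)
    have "C * (real n + 1) ^ E * (M / \<mu>) ^ n \<le> c / 2 * \<mu> ^ n * (M / \<mu>) ^ n"
      using elim assms(1,3) by (intro mult_right_mono) auto
    also have "\<dots> = c / 2 * M ^ n"
      using assms(1) by (simp add: power_divide)
    finally have "norm (x n - y n) \<le> c / 2 * M ^ n"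
      using assms(5)[of n] by linarith
    then show ?case
      using assms(4)[of n] norm_triangle_ineq2[of "y n" "x n"] norm_minus_commute[of "x n"]
      by (simp add: algebra_simps)
  qed
qed

lemma root_poly_exp_tendsto:
  fixes C M :: real
  assumes "0 < C" "0 < M"
  shows "(\<lambda>n. (C * (real n + 1) ^ E * M ^ n) powr (1 / real n)) \<longlonglongrightarrow> M"
proof -
  have "(\<lambda>n. (C * (real n + 1) ^ E) powr (1 / real n) * M) \<longlonglongrightarrow> 1 * M"
    using assms(1) by (intro tendsto_mult_right) real_asymp
  moreover have "\<forall>\<^sub>F n in sequentially.
      (C * (real n + 1) ^ E) powr (1 / real n) * M = (C * (real n + 1) ^ E * M ^ n) powr (1 / real n)"
    using eventually_ge_at_top[of "1::nat"]
    by eventually_elim (use assms in \<open>simp add: powr_mult powr_realpow[symmetric] powr_powr\<close>)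
  ultimately show ?thesis
    by (simp add: tendsto_cong)
qed

lemma eventually_bound_of_Suc_bound:
  fixes x :: "nat \<Rightarrow> real" and C M :: real
  assumes "0 < M" "\<And>n. x (Suc n) \<le> C * (real n + 1) ^ E * M ^ n"
  shows "\<forall>\<^sub>F n in sequentially. x n \<le> max C 1 / M * (real n + 1) ^ E * M ^ n"
proof -
  have "x (Suc n) \<le> max C 1 / M * (real (Suc n) + 1) ^ E * M ^ Suc n" for n
  proof -
    have "C * (real n + 1) ^ E * M ^ n \<le> max C 1 * (real (Suc n) + 1) ^ E * M ^ n"
      using assms(1) by (intro mult_right_mono mult_mono power_mono) auto
    also have "\<dots> = max C 1 / M * (real (Suc n) + 1) ^ E * M ^ Suc n"
      using assms(1) by simp
    finally show ?thesis
      using assms(2)[of n] by linarith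
  qed
  then show ?thesis
    by (subst eventually_sequentially_Suc[symmetric]) simp
qed

lemma limsup_root_le:
  fixes x :: "nat \<Rightarrow> real" and C M :: real
  assumes "0 < M" "\<And>n. 0 \<le> x n" "\<And>n. x (Suc n) \<le> C * (real n + 1) ^ E * M ^ n"
  shows "limsup (\<lambda>n. ereal (x n powr (1 / real n))) \<le> ereal M"
proof -
  let ?C = "max C 1 / M"
  have "limsup (\<lambda>n. ereal (x n powr (1 / real n)))
      \<le> limsup (\<lambda>n. ereal ((?C * (real n + 1) ^ E * M ^ n) powr (1 / real n)))"
    using eventually_bound_of_Suc_bound[OF assms(1,3)]
    by (intro Limsup_mono) (elim eventually_mono, use assms(2) in \<open>auto intro: powr_mono2\<close>)
  also have "\<dots> = ereal M"
    using assms(1) by (intro lim_imp_Limsup tendsto_ereal root_poly_exp_tendsto) auto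
  finally show ?thesis .
qed

lemma root_tendsto:
  fixes x :: "nat \<Rightarrow> real" and c C M :: real
  assumes "0 < M" "0 < c" "\<And>n. 0 \<le> x n" "\<And>n. x (Suc n) \<le> C * (real n + 1) ^ E * M ^ n"
    and "\<forall>\<^sub>F n in sequentially. c * M ^ n \<le> x (Suc n)"
  shows "(\<lambda>n. x n powr (1 / real n)) \<longlonglongrightarrow> M"
proof (rule tendsto_sandwich)
  have "\<forall>\<^sub>F n in sequentially. c / M * (real n + 1) ^ 0 * M ^ n \<le> x n"
    using assms(1,5) by (subst eventually_sequentially_Suc[symmetric]) simp
  then show "\<forall>\<^sub>F n in sequentially. (c / M * (real n + 1) ^ 0 * M ^ n) powr (1 / real n) \<le> x n powr (1 / real n)"
    using assms(1,2) by (elim eventually_mono) (auto intro: powr_mono2)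
  show "\<forall>\<^sub>F n in sequentially. x n powr (1 / real n) \<le> (max C 1 / M * (real n + 1) ^ E * M ^ n) powr (1 / real n)"
    using eventually_bound_of_Suc_bound[OF assms(1,4)]
    by (elim eventually_mono) (use assms(3) in \<open>auto intro: powr_mono2\<close>)
  show "(\<lambda>n. (c / M * (real n + 1) ^ 0 * M ^ n) powr (1 / real n)) \<longlonglongrightarrow> M"
    using assms(1,2) by (intro root_poly_exp_tendsto) auto
  show "(\<lambda>n. (max C 1 / M * (real n + 1) ^ E * M ^ n) powr (1 / real n)) \<longlonglongrightarrow> M"
    using assms(1) by (intro root_poly_exp_tendsto) auto
qed

lemma growth_rate_le:
  assumes "1 \<le> M" "\<And>n. cmod (det (hankel a (Suc n) k)) \<le> C * (real n + 1) ^ E * M ^ n"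
  shows "growth_rate k a \<le> ereal M"
proof (cases "k = 0")
  case False
  have "limsup (\<lambda>n. ereal (cmod (det (hankel a n k)) powr (1 / real n))) \<le> ereal M"
    using assms by (intro limsup_root_le) auto
  then show ?thesis
    using False by (simp add: growth_rate_def)
qed (use assms(1) in \<open>simp add: growth_rate_def\<close>)

lemma growth_rate_eq:
  assumes "0 < k" "0 < c" "1 \<le> M"
    and "\<And>n. cmod (det (hankel a (Suc n) k)) \<le> C * (real n + 1) ^ E * M ^ n"
    and "\<forall>\<^sub>F n in sequentially. c * M ^ n \<le> cmod (det (hankel a (Suc n) k))"
  shows "growth_rate k a = ereal M"
proof -
  have "(\<lambda>n. cmod (det (hankel a n k)) powr (1 / real n)) \<longlonglongrightarrow> M"
    using assms(2-5) by (intro root_tendsto) auto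
  then show ?thesis
    using assms(1) by (simp add: growth_rate_def lim_imp_Limsup tendsto_ereal)
qed

section \<open>Hankel determinants of a sum of root components\<close>

text \<open>\<^term>\<open>component r\<close> is the component of a sequence belonging to the root \<open>r\<close>; the assumption
  forces \<^term>\<open>component r = (\<lambda>_. 0)\<close> whenever \<open>r\<close> is not a root of \<open>f\<close>.\<close>

locale root_decomposition =
  fixes f :: "complex poly" and component :: "complex \<Rightarrow> nat \<Rightarrow> complex"
  assumes monic: "lead_coeff f = 1"
    and component_annihilated: "annihilates ([:-r, 1:] ^ order r f) (component r)"
begin

definition zeros :: "complex set" where
  "zeros = {r. poly f r = 0}"

definition part :: "complex set \<Rightarrow> nat \<Rightarrow> complex" where
  "part S n = (\<Sum>r\<in>S. component r n)"

definition index_set :: "complex set \<Rightarrow> (complex \<times> nat) set" where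
  "index_set S = (SIGMA r:S. {..<order r f})"

definition coeff_seq :: "complex \<times> nat \<Rightarrow> nat \<Rightarrow> complex" where
  "coeff_seq x n = component (fst x) (n + snd x)"

definition weight :: "complex \<times> nat \<Rightarrow> nat \<Rightarrow> complex" where
  "weight x j = coeff (monom 1 j mod [:-fst x, 1:] ^ order (fst x) f) (snd x)"

lemma f_nonzero: "f \<noteq> 0"
  using monic by auto

lemma finite_zeros: "finite zeros"
  unfolding zeros_def using f_nonzero by (rule poly_roots_finite)

lemma finite_index_set: "finite S \<Longrightarrow> finite (index_set S)"
  by (simp add: index_set_def)

lemma index_set_mono: "S \<subseteq> T \<Longrightarrow> index_set S \<subseteq> index_set T"
  by (auto simp: index_set_def)

lemma part_eq_sum_index_set:
  assumes "finite S"
  shows "part S (n + j) = (\<Sum>x\<in>index_set S. coeff_seq x n * weight x j)"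
proof -
  have "part S (n + j) = (\<Sum>(r, l)\<in>(SIGMA r:S. {..<degree ([:-r, 1:] ^ order r f)}).
      component r (n + l) * coeff (monom 1 j mod [:-r, 1:] ^ order r f) l)"
    unfolding part_def using assms component_annihilated
    by (rule sum_annihilated_eq_sum_Sigma) simp
  then show ?thesis
    by (simp add: index_set_def coeff_seq_def weight_def degree_linear_power case_prod_beta add.commute)
qed

lemma det_hankel_part:
  assumes "finite S"
  shows "det (hankel (part S) n k) = (\<Sum>\<tau>\<in>{0..<k} \<rightarrow>\<^sub>E index_set S.
    (\<Prod>i=0..<k. coeff_seq (\<tau> i) (n + i)) * det (mat k k (\<lambda>(i, j). weight (\<tau> i) j)))"
proof -
  have "part S (n + i + j) = (\<Sum>x\<in>index_set S. coeff_seq x (n + i) * weight x j)" for i j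
    by (rule part_eq_sum_index_set[OF assms])
  then have "hankel (part S) n k = mat k k (\<lambda>(i, j). \<Sum>x\<in>index_set S. coeff_seq x (n + i) * weight x j)"
    by (auto simp: hankel_def intro!: cong_mat)
  then show ?thesis
    using det_mat_sum_rows[OF finite_index_set[OF assms], of k "\<lambda>x i. coeff_seq x (n + i)"] by simp
qed

lemma coeff_seq_bound:
  obtains K where "\<And>x n. cmod (coeff_seq x n) \<le> K x * (real n + 1) ^ degree f * max (cmod (fst x)) 1 ^ n"
proof -
  have "\<exists>K. \<forall>n. cmod (coeff_seq x n) \<le> K * (real n + 1) ^ degree f * max (cmod (fst x)) 1 ^ n" for x
  proof -
    obtain K where K: "K \<ge> 0"
      "\<And>n. cmod (coeff_seq x n) \<le> K * (real n + 1) ^ order (fst x) f * max (cmod (fst x)) 1 ^ n"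
      using annihilated_by_linear_power_bound[OF annihilates_shift[OF component_annihilated]]
      unfolding coeff_seq_def by blast
    have "(real n + 1) ^ order (fst x) f \<le> (real n + 1) ^ degree f" for n
      using order_degree[OF f_nonzero] by (intro power_increasing) auto
    then have "K * (real n + 1) ^ order (fst x) f * max (cmod (fst x)) 1 ^ n
        \<le> K * (real n + 1) ^ degree f * max (cmod (fst x)) 1 ^ n" for n
      using K(1) by (intro mult_right_mono mult_left_mono) auto
    then show ?thesis
      using K(2) order.trans by blast
  qed
  then show ?thesis
    using that by metis
qed

lemma prod_index_set:
  assumes "finite S"
  shows "(\<Prod>x\<in>index_set S. \<rho> (fst x)) = (\<Prod>r\<in>S. \<rho> r ^ order r f)"
proof -
  have "(\<Prod>r\<in>S. \<rho> r ^ order r f) = (\<Prod>r\<in>S. \<Prod>l<order r f. \<rho> r)"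
    by simp
  also have "\<dots> = (\<Prod>x\<in>index_set S. \<rho> (fst x))"
    unfolding index_set_def using assms by (subst prod.Sigma) (auto simp: case_prod_beta)
  finally show ?thesis ..
qed

lemma mahler_measure_eq_prod_index_set:
  "mahler_measure f = (\<Prod>x\<in>index_set zeros. max (cmod (fst x)) 1)"
  using monic prod_index_set[OF finite_zeros, of "\<lambda>r. max (cmod r) 1"]
  by (simp add: mahler_measure_def zeros_def[symmetric])

lemma mahler_measure_ge_1: "1 \<le> mahler_measure f"
  unfolding mahler_measure_eq_prod_index_set by (intro prod_ge_1) simp

lemma det_hankel_le:
  "\<exists>C. \<forall>n. cmod (det (hankel (part zeros) n k)) \<le> C * (real n + 1) ^ (degree f * k) * mahler_measure f ^ n"
proof -
  let ?X = "index_set zeros"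
  let ?\<rho> = "\<lambda>x. max (cmod (fst x)) 1"
  obtain K where K: "\<And>x n. cmod (coeff_seq x n) \<le> K x * (real n + 1) ^ degree f * ?\<rho> x ^ n"
    using coeff_seq_bound by blast
  have "(\<Prod>i=0..<k. ?\<rho> (\<tau> i)) \<le> mahler_measure f"
    if "\<tau> \<in> {0..<k} \<rightarrow>\<^sub>E ?X" "inj_on \<tau> {0..<k}" for \<tau>
  proof -
    have "(\<Prod>i=0..<k. ?\<rho> (\<tau> i)) = (\<Prod>x\<in>\<tau> ` {0..<k}. ?\<rho> x)"
      using that(2) by (simp add: prod.reindex)
    also have "\<dots> \<le> (\<Prod>x\<in>?X. ?\<rho> x)"
      using that(1) finite_index_set[OF finite_zeros] by (intro prod_mono2) auto
    finally show ?thesis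
      by (simp add: mahler_measure_eq_prod_index_set)
  qed
  then show ?thesis
    unfolding det_hankel_part[OF finite_zeros]
    by (intro norm_sum_det_rows_le[OF finite_index_set[OF finite_zeros] order.refl K]) auto
qed

definition outer :: "complex set" where
  "outer = {r \<in> zeros. 1 < cmod r}"

definition factor :: "complex set \<Rightarrow> complex poly" where
  "factor S = (\<Prod>r\<in>S. [:-r, 1:] ^ order r f)"

lemma outer_subset: "outer \<subseteq> zeros"
  by (auto simp: outer_def)

lemma finite_outer: "finite outer"
  using finite_subset[OF outer_subset finite_zeros] .

lemma annihilates_factor_part:
  assumes "finite S"
  shows "annihilates (factor S) (part S)"
  unfolding part_def factor_def
  using assms by (intro annihilates_seq_sum annihilates_dvd[OF component_annihilated] dvd_prodI)

lemma f_eq_factor_mult: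
  assumes "S \<subseteq> zeros"
  shows "f = factor S * factor (zeros - S)"
proof -
  have "f = factor zeros"
    using complex_poly_decompose[of f] monic by (simp add: factor_def zeros_def)
  also have "\<dots> = factor (zeros - S) * factor S"
    unfolding factor_def by (rule prod.subset_diff[OF assms finite_zeros])
  finally show ?thesis
    by (simp add: mult.commute)
qed

lemma part_zeros_eq:
  assumes "S \<subseteq> zeros"
  shows "part zeros n = part S n + part (zeros - S) n"
  unfolding part_def using finite_zeros assms by (simp add: sum.subset_diff add.commute)

lemma lead_coeff_factor: "lead_coeff (factor S) = 1"
  by (simp add: factor_def lead_coeff_prod lead_coeff_power)

lemma degree_factor:
  assumes "finite S"
  shows "degree (factor S) = card (index_set S)"
  using assms by (simp add: factor_def degree_prod_eq_sum_degree degree_linear_power index_set_def card_SigmaI)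

lemma mahler_measure_eq_prod_outer:
  "mahler_measure f = (\<Prod>x\<in>index_set outer. max (cmod (fst x)) 1)"
proof -
  let ?\<rho> = "\<lambda>r. max (cmod r) 1 ^ order r f"
  have "mahler_measure f = (\<Prod>r\<in>zeros. ?\<rho> r)"
    using prod_index_set[OF finite_zeros, of "\<lambda>r. max (cmod r) 1"]
    by (simp add: mahler_measure_eq_prod_index_set)
  also have "\<dots> = (\<Prod>r\<in>zeros - outer. ?\<rho> r) * (\<Prod>r\<in>outer. ?\<rho> r)"
    by (rule prod.subset_diff[OF outer_subset finite_zeros])
  also have "(\<Prod>r\<in>zeros - outer. ?\<rho> r) = 1"
    by (intro prod.neutral) (auto simp: outer_def max_def)
  finally show ?thesis
    using prod_index_set[OF finite_outer, of "\<lambda>r. max (cmod r) 1"] by simp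
qed

lemma norm_coeff_0_factor_outer: "cmod (coeff (factor outer) 0) = mahler_measure f"
proof -
  have "cmod (coeff (factor outer) 0) = (\<Prod>r\<in>outer. cmod r ^ order r f)"
    by (simp add: poly_0_coeff_0[symmetric] factor_def poly_prod prod_norm[symmetric] norm_power)
  also have "\<dots> = (\<Prod>r\<in>outer. max (cmod r) 1 ^ order r f)"
    by (intro prod.cong) (auto simp: outer_def)
  finally show ?thesis
    using prod_index_set[OF finite_outer, of "\<lambda>r. max (cmod r) 1"] by (simp add: mahler_measure_eq_prod_outer)
qed

lemma norm_det_hankel_outer:
  "cmod (det (hankel (part outer) n (degree (factor outer)))) =
     mahler_measure f ^ n * cmod (det (hankel (part outer) 0 (degree (factor outer))))"
  unfolding det_hankel_annihilated[OF lead_coeff_factor annihilates_factor_part[OF finite_outer], of n]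
  by (simp add: norm_mult norm_power norm_coeff_0_factor_outer)

lemma det_hankel_outer_nonzero:
  assumes "\<And>p. p \<noteq> 0 \<Longrightarrow> annihilates p (part zeros) \<Longrightarrow> f dvd p"
  shows "det (hankel (part outer) 0 (degree (factor outer))) \<noteq> 0"
proof (rule det_hankel_0_nonzero)
  show "annihilates (factor outer) (part outer)"
    by (rule annihilates_factor_part[OF finite_outer])
  show "annihilates (factor (zeros - outer)) (part (zeros - outer))"
    by (rule annihilates_factor_part) (simp add: finite_zeros)
  show "factor outer \<noteq> 0" "factor (zeros - outer) \<noteq> 0"
    using lead_coeff_factor[of outer] lead_coeff_factor[of "zeros - outer"] by auto
  fix p
  assume p: "p \<noteq> 0" "annihilates p (\<lambda>n. part outer n + part (zeros - outer) n)"
  have "part zeros = (\<lambda>n. part outer n + part (zeros - outer) n)"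
    using part_zeros_eq[OF outer_subset] by blast
  then have "f dvd p"
    using assms p by simp
  then show "factor outer * factor (zeros - outer) dvd p"
    by (simp flip: f_eq_factor_mult[OF outer_subset])
qed

lemma outer_nonempty: "1 < mahler_measure f \<Longrightarrow> outer \<noteq> {}"
  by (auto simp: mahler_measure_eq_prod_outer index_set_def)

lemma degree_factor_outer_pos:
  assumes "outer \<noteq> {}"
  shows "0 < degree (factor outer)"
proof -
  obtain r where "r \<in> outer"
    using assms by blast
  then have "(r, 0) \<in> index_set outer"
    using f_nonzero by (auto simp: index_set_def outer_def zeros_def order_root)
  then show ?thesis
    using finite_index_set[OF finite_outer] by (auto simp: degree_factor[OF finite_outer] card_gt_0_iff)
qed

lemma det_hankel_diff_eq_sum:
  "det (hankel (part zeros) n k) - det (hankel (part outer) n k) =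
    (\<Sum>\<tau>\<in>({0..<k} \<rightarrow>\<^sub>E index_set zeros) - ({0..<k} \<rightarrow>\<^sub>E index_set outer).
      (\<Prod>i=0..<k. coeff_seq (\<tau> i) (n + i)) * det (mat k k (\<lambda>(i, j). weight (\<tau> i) j)))"
proof -
  have "{0..<k} \<rightarrow>\<^sub>E index_set outer \<subseteq> {0..<k} \<rightarrow>\<^sub>E index_set zeros"
    by (intro PiE_mono index_set_mono[OF outer_subset])
  moreover have "finite ({0..<k} \<rightarrow>\<^sub>E index_set zeros)"
    using finite_index_set[OF finite_zeros] by (simp add: finite_PiE)
  ultimately show ?thesis
    unfolding det_hankel_part[OF finite_zeros] det_hankel_part[OF finite_outer]
    by (simp add: sum.subset_diff)
qed

lemma prod_weight_le_outer:
  assumes "\<And>r. r \<in> outer \<Longrightarrow> \<mu> \<le> cmod r" "1 \<le> \<mu>"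
    and \<tau>: "\<tau> \<in> ({0..<degree (factor outer)} \<rightarrow>\<^sub>E index_set zeros) - ({0..<degree (factor outer)} \<rightarrow>\<^sub>E index_set outer)"
    and inj: "inj_on \<tau> {0..<degree (factor outer)}"
  shows "\<mu> * (\<Prod>i=0..<degree (factor outer). max (cmod (fst (\<tau> i))) 1) \<le> mahler_measure f"
proof -
  let ?S = "\<tau> ` {0..<degree (factor outer)}" and ?Xo = "index_set outer"
  let ?\<rho> = "\<lambda>x. max (cmod (fst x)) 1"
  have "\<not> ?S \<subseteq> ?Xo"
    using \<tau> by (auto simp: PiE_iff)
  moreover have "card ?S = card ?Xo"
    using inj degree_factor[OF finite_outer] by (simp add: card_image)
  moreover have "?\<rho> x = 1" if "x \<in> ?S - ?Xo" for x
    using that \<tau> by (auto simp: PiE_iff index_set_def outer_def)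
  moreover have "\<mu> \<le> ?\<rho> x" if "x \<in> ?Xo" for x
    using that assms(1) by (force simp: index_set_def)
  ultimately have "\<mu> * (\<Prod>x\<in>?S. ?\<rho> x) \<le> (\<Prod>x\<in>?Xo. ?\<rho> x)"
    using assms(2) finite_index_set[OF finite_outer] by (intro prod_le_prod_strict) auto
  then show ?thesis
    using inj by (simp add: prod.reindex mahler_measure_eq_prod_outer)
qed

lemma norm_det_hankel_diff_le:
  assumes "outer \<noteq> {}"
  shows "\<exists>\<mu>>1. \<exists>C. \<forall>n.
    cmod (det (hankel (part zeros) n (degree (factor outer))) - det (hankel (part outer) n (degree (factor outer))))
      \<le> C * (real n + 1) ^ (degree f * degree (factor outer)) * (mahler_measure f / \<mu>) ^ n"
proof -
  define \<mu> where "\<mu> = Min (cmod ` outer)"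
  have \<mu>: "1 < \<mu>" "\<And>r. r \<in> outer \<Longrightarrow> \<mu> \<le> cmod r"
    using Min_in[of "cmod ` outer"] finite_outer assms by (auto simp: \<mu>_def outer_def)
  obtain K where K: "\<And>x n. cmod (coeff_seq x n) \<le> K x * (real n + 1) ^ degree f * max (cmod (fst x)) 1 ^ n"
    using coeff_seq_bound by blast
  have "\<exists>C. \<forall>n. cmod (det (hankel (part zeros) n (degree (factor outer))) - det (hankel (part outer) n (degree (factor outer))))
      \<le> C * (real n + 1) ^ (degree f * degree (factor outer)) * (mahler_measure f / \<mu>) ^ n"
    unfolding det_hankel_diff_eq_sum
    using prod_weight_le_outer[OF \<mu>(2)] \<mu>(1)
    by (intro norm_sum_det_rows_le[OF finite_index_set[OF finite_zeros] Diff_subset K])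
      (auto simp: field_simps)
  then show ?thesis
    using \<mu>(1) by blast
qed

lemma det_hankel_ge:
  assumes "1 < mahler_measure f" and "\<And>p. p \<noteq> 0 \<Longrightarrow> annihilates p (part zeros) \<Longrightarrow> f dvd p"
  shows "\<exists>k>0. \<exists>c>0. \<forall>\<^sub>F n in sequentially. c * mahler_measure f ^ n \<le> cmod (det (hankel (part zeros) n k))"
proof -
  let ?k = "degree (factor outer)"
  obtain \<mu> C where "1 < \<mu>" and C: "\<And>n. cmod (det (hankel (part zeros) n ?k) - det (hankel (part outer) n ?k))
      \<le> C * (real n + 1) ^ (degree f * ?k) * (mahler_measure f / \<mu>) ^ n"
    using norm_det_hankel_diff_le[OF outer_nonempty[OF assms(1)]] by blast
  define c where "c = cmod (det (hankel (part outer) 0 ?k))"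
  have "0 < c"
    using det_hankel_outer_nonzero[OF assms(2)] by (simp add: c_def)
  have "\<forall>\<^sub>F n in sequentially. c / 2 * mahler_measure f ^ n \<le> cmod (det (hankel (part zeros) n ?k))"
    using \<open>1 < \<mu>\<close> \<open>0 < c\<close> assms(1) norm_det_hankel_outer[of _, folded c_def] C
    by (intro eventually_norm_ge_of_dominant) auto
  then show ?thesis
    using \<open>0 < c\<close> degree_factor_outer_pos[OF outer_nonempty[OF assms(1)]] half_gt_zero by blast
qed

end

lemma root_decomposition_exists:
  assumes "lead_coeff f = 1" "annihilates f s"
  obtains b where "root_decomposition f b" "s = (\<lambda>n. \<Sum>r\<in>{r. poly f r = 0}. b r n)"
proof -
  let ?R = "{r. poly f r = 0}"
  let ?P = "\<lambda>r. [:-r, 1:] ^ order r f"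
  have "f \<noteq> 0"
    using assms(1) by auto
  then have "finite ?R"
    by (rule poly_roots_finite)
  have "(\<Prod>r\<in>?R. ?P r) = f"
    using complex_poly_decompose[of f] assms(1) by simp
  have "\<exists>b. (\<forall>r\<in>?R. annihilates (?P r) (b r)) \<and> (\<forall>n. s n = (\<Sum>r\<in>?R. b r n))"
  proof (rule annihilates_prod_decompose[OF \<open>finite ?R\<close>])
    fix r r' :: complex
    assume "r \<noteq> r'"
    then show "coprime (?P r) (?P r')"
      by (rule coprime_linear_powers)
  next
    show "annihilates (\<Prod>r\<in>?R. ?P r) s"
      using assms(2) \<open>(\<Prod>r\<in>?R. ?P r) = f\<close> by simp
  qed
  then obtain b where b: "\<forall>r\<in>?R. annihilates (?P r) (b r)" "\<forall>n. s n = (\<Sum>r\<in>?R. b r n)"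
    by blast
  define b' where "b' r = (if r \<in> ?R then b r else (\<lambda>_. 0))" for r
  have "root_decomposition f b'"
    using assms(1) b(1) by unfold_locales (auto simp: b'_def annihilates_def)
  moreover have "s = (\<lambda>n. \<Sum>r\<in>?R. b' r n)"
    using b(2) by (simp add: b'_def fun_eq_iff)
  ultimately show ?thesis
    using that by blast
qed

theorem proposition2p2:
  fixes a :: "nat \<Rightarrow> complex" and f :: "complex poly"
  assumes "linearly_recurrent a"
    and "minimal_polynomial a f"
  shows "(\<forall>k. growth_rate k a \<le> ereal (mahler_measure f)) \<and>
         (\<exists>k. growth_rate k a = ereal (mahler_measure f))"
proof -
  let ?M = "mahler_measure f"
  txt \<open>The hypothesis \<^term>\<open>linearly_recurrent a\<close> is implied by the second one.\<close>
  have "lead_coeff f = 1" "annihilates f (\<lambda>n. a (Suc n))"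
    using assms(2) by (auto simp: minimal_polynomial_def satisfies_recurrence_iff_annihilates)
  then obtain component where "root_decomposition f component"
    and "(\<lambda>n. a (Suc n)) = (\<lambda>n. \<Sum>r\<in>{r. poly f r = 0}. component r n)"
    using root_decomposition_exists by blast
  interpret root_decomposition f component by fact
  have a_Suc_eq: "(\<lambda>n. a (Suc n)) = part zeros"
    using \<open>(\<lambda>n. a (Suc n)) = _\<close> by (simp add: part_def zeros_def fun_eq_iff)
  have hankel_a: "hankel a (Suc n) k = hankel (part zeros) n k" for n k
    unfolding hankel_def a_Suc_eq[symmetric] by simp
  have upper: "\<exists>C. \<forall>n. cmod (det (hankel a (Suc n) k)) \<le> C * (real n + 1) ^ (degree f * k) * ?M ^ n" for k
    unfolding hankel_a by (rule det_hankel_le)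
  have "growth_rate k a \<le> ereal ?M" for k
    using upper[of k] growth_rate_le[OF mahler_measure_ge_1] by blast
  moreover have "\<exists>k. growth_rate k a = ereal ?M"
  proof (cases "?M = 1")
    case False
    have "\<And>p. p \<noteq> 0 \<Longrightarrow> annihilates p (part zeros) \<Longrightarrow> f dvd p"
      using minimal_polynomial_dvd[OF assms(2)] by (simp add: a_Suc_eq)
    then obtain k c where "0 < k" "0 < c"
      and "\<forall>\<^sub>F n in sequentially. c * ?M ^ n \<le> cmod (det (hankel a (Suc n) k))"
      using det_hankel_ge False mahler_measure_ge_1 by (auto simp: hankel_a)
    then show ?thesis
      using upper[of k] growth_rate_eq[OF _ _ mahler_measure_ge_1] by blast
  qed (auto simp: growth_rate_def intro: exI[of _ 0])
  ultimately show ?thesis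
    by blast
qed

end
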